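(* Let $X$ be a rack and let $\mathcal T_2=\{0,1\}$ be the trivial rack on two elements. Then the pair $(X,\mathcal T_2)$ is productive, i.e. the homomorphism $\Gamma'_{X\times\mathcal T_2}\to\Gamma'_X\times\Gamma'_{\mathcal T_2}$ induced on commutator subgroups by the natural homomorphism $\Gamma_{X\times\mathcal T_2}\to\Gamma_X\times\Gamma_{\mathcal T_2}$ is injective.
   Context: A rack is a set $X$ with an operation $x^y$ such that $x\mapsto x^y$ is bijective for each $y$ and $(z^x)^y=(z^y)^{x^y}$. The trivial rack $\mathcal T_2$ has $a^b=a$. The product rack $X\times Y$ has $(x,a)^{(y,b)}=(x^y,a^b)$. The structure group is $\Gamma_X=\langle X\mid y^{-1}xy=x^y\text{ for all }x,y\in X\rangle$, functorial in rack morphisms; $\Gamma'$ denotes the commutator subgroup. *)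

theory Defs
  imports "HOL-Algebra.Algebra"
begin

text \<open>A rack on the carrier set S with operation rop, where rop x y stands for x^y.\<close>
definition is_rack :: "'a set \<Rightarrow> ('a \<Rightarrow> 'a \<Rightarrow> 'a) \<Rightarrow> bool" where
  "is_rack S rop \<longleftrightarrow>
     (\<forall>x\<in>S. \<forall>y\<in>S. rop x y \<in> S) \<and>
     (\<forall>y\<in>S. bij_betw (\<lambda>x. rop x y) S S) \<and>
     (\<forall>x\<in>S. \<forall>y\<in>S. \<forall>z\<in>S. rop (rop z x) y = rop (rop z y) (rop x y))"

text \<open>The trivial rack T_2 on two elements (carrier UNIV :: bool set).\<close>
definition triv_op :: "bool \<Rightarrow> bool \<Rightarrow> bool" where
  "triv_op a b = a"

definition prod_op :: "('a \<Rightarrow> 'a \<Rightarrow> 'a) \<Rightarrow> ('b \<Rightarrow> 'b \<Rightarrow> 'b) \<Rightarrow>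
    ('a \<times> 'b) \<Rightarrow> ('a \<times> 'b) \<Rightarrow> ('a \<times> 'b)" where
  "prod_op rop1 rop2 p q = (rop1 (fst p) (fst q), rop2 (snd p) (snd q))"

text \<open>Words in the generators: a letter (x, True) is the generator x, (x, False) its inverse.\<close>
definition words :: "'a set \<Rightarrow> ('a \<times> bool) list set" where
  "words S = {w. set (map fst w) \<subseteq> S}"

text \<open>The congruence on words defining the presentation
  \<langle>S | y^-1 x y = x^y\<rangle>: the equivalence relation generated by free
  cancellation and the rack relations, inserted anywhere in a word.\<close>
inductive sg_rel :: "'a set \<Rightarrow> ('a \<Rightarrow> 'a \<Rightarrow> 'a) \<Rightarrow> ('a \<times> bool) list \<Rightarrow> ('a \<times> bool) list \<Rightarrow> bool"
  for S rop where
  sg_refl: "w \<in> words S \<Longrightarrow> sg_rel S rop w w"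
| sg_sym: "sg_rel S rop v w \<Longrightarrow> sg_rel S rop w v"
| sg_trans: "sg_rel S rop u v \<Longrightarrow> sg_rel S rop v w \<Longrightarrow> sg_rel S rop u w"
| sg_cancel: "u \<in> words S \<Longrightarrow> v \<in> words S \<Longrightarrow> x \<in> S \<Longrightarrow>
     sg_rel S rop (u @ [(x, b), (x, \<not> b)] @ v) (u @ v)"
| sg_rack: "u \<in> words S \<Longrightarrow> v \<in> words S \<Longrightarrow> x \<in> S \<Longrightarrow> y \<in> S \<Longrightarrow>
     sg_rel S rop (u @ [(y, False), (x, True), (y, True)] @ v) (u @ [(rop x y, True)] @ v)"

definition sg_class :: "'a set \<Rightarrow> ('a \<Rightarrow> 'a \<Rightarrow> 'a) \<Rightarrow> ('a \<times> bool) list \<Rightarrow> ('a \<times> bool) list set" where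
  "sg_class S rop w = {v. sg_rel S rop w v}"

definition structure_group :: "'a set \<Rightarrow> ('a \<Rightarrow> 'a \<Rightarrow> 'a) \<Rightarrow> ('a \<times> bool) list set monoid" where
  "structure_group S rop =
     \<lparr> carrier = sg_class S rop ` words S,
       monoid.mult = (\<lambda>A B. {v. \<exists>a\<in>A. \<exists>b\<in>B. sg_rel S rop (a @ b) v}),
       monoid.one = sg_class S rop [] \<rparr>"

text \<open>The natural map Gamma_{S x T2} -> Gamma_X x Gamma_{T2}, induced by the two
  projection rack morphisms (applied letterwise to representing words).\<close>
definition natural_map :: "'a set \<Rightarrow> ('a \<Rightarrow> 'a \<Rightarrow> 'a) \<Rightarrow> 'b set \<Rightarrow> ('b \<Rightarrow> 'b \<Rightarrow> 'b) \<Rightarrow>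
    (('a \<times> 'b) \<times> bool) list set \<Rightarrow> ('a \<times> bool) list set \<times> ('b \<times> bool) list set" where
  "natural_map S rop1 Y rop2 A =
     the_elem ((\<lambda>w. (sg_class S rop1 (map (\<lambda>(p, e). (fst p, e)) w),
                     sg_class Y rop2 (map (\<lambda>(p, e). (snd p, e)) w))) ` A)"

end

theory Submission
  imports Defs
begin

text \<open>Let \<open>Y = X \<times> T\<^sub>2\<close>. The rack endomorphism \<open>(x, a) \<mapsto> (x, False)\<close> of \<open>Y\<close> induces an
  endomorphism \<open>c\<close> of \<open>\<Gamma>\<^sub>Y\<close> that factors through \<open>\<Gamma>\<^sub>X\<close> via the first projection. Since the
  rack operation of \<open>Y\<close> ignores the \<open>T\<^sub>2\<close>-coordinate of its right argument, the generators
  \<open>(x, a)\<close> and \<open>(x, b)\<close> act identically by conjugation on the generators of \<open>\<Gamma>\<^sub>Y\<close>, so their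
  quotient is central; consequently \<open>g c(g)\<inverse>\<close> is central for every \<open>g\<close>. Commutators do not see
  central factors, so \<open>c\<close> fixes \<open>\<Gamma>'\<^sub>Y\<close> pointwise. Hence already the first component
  \<open>\<Gamma>'\<^sub>Y \<rightarrow> \<Gamma>'\<^sub>X\<close> of the natural map is injective.\<close>

section \<open>Centers and central defects of endomorphisms\<close>

definition centralizer :: "('g, 'b) monoid_scheme \<Rightarrow> 'g set \<Rightarrow> 'g set" where
  "centralizer G A = {y \<in> carrier G. \<forall>a\<in>A. a \<otimes>\<^bsub>G\<^esub> y = y \<otimes>\<^bsub>G\<^esub> a}"

definition center :: "('g, 'b) monoid_scheme \<Rightarrow> 'g set" where
  "center G = centralizer G (carrier G)"

context group
begin

lemma subgroup_centralizer:
  assumes "A \<subseteq> carrier G"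
  shows "subgroup (centralizer G A) G"
proof (rule subgroupI)
  show "centralizer G A \<subseteq> carrier G" by (auto simp: centralizer_def)
  show "centralizer G A \<noteq> {}" using assms by (auto simp: centralizer_def intro!: exI[of _ \<one>])
next
  fix y assume "y \<in> centralizer G A"
  then have y: "y \<in> carrier G" and comm: "\<And>a. a \<in> A \<Longrightarrow> a \<otimes> y = y \<otimes> a"
    by (auto simp: centralizer_def)
  have "a \<otimes> inv y = inv y \<otimes> a" if a: "a \<in> A" for a
  proof -
    have "a \<otimes> inv y = inv y \<otimes> (y \<otimes> a) \<otimes> inv y"
      using a y assms by (auto simp: m_assoc[symmetric])
    also have "\<dots> = inv y \<otimes> a"
      using a y assms by (auto simp: comm[OF a, symmetric] m_assoc)
    finally show ?thesis .
  qed
  then show "inv y \<in> centralizer G A" using y by (simp add: centralizer_def)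
next
  fix y z assume "y \<in> centralizer G A" "z \<in> centralizer G A"
  then show "y \<otimes> z \<in> centralizer G A" using assms
    by (auto simp: centralizer_def subset_iff) (metis m_assoc)
qed

lemma subgroup_center: "subgroup (center G) G"
  unfolding center_def by (rule subgroup_centralizer) simp

lemma center_commute: "c \<in> center G \<Longrightarrow> y \<in> carrier G \<Longrightarrow> c \<otimes> y = y \<otimes> c"
  by (simp add: center_def centralizer_def)

lemma center_closed: "c \<in> center G \<Longrightarrow> c \<in> carrier G"
  by (simp add: center_def centralizer_def)

lemma center_if_commutes_with_generators:
  assumes gen: "carrier G = generate G A" and A: "A \<subseteq> carrier G"
    and z: "z \<in> carrier G" and comm: "\<And>a. a \<in> A \<Longrightarrow> z \<otimes> a = a \<otimes> z"
  shows "z \<in> center G"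
proof -
  have "A \<subseteq> centralizer G {z}" using A comm by (auto simp: centralizer_def)
  then have "carrier G \<subseteq> centralizer G {z}"
    unfolding gen using z by (intro generate_subgroup_incl subgroup_centralizer) auto
  then show ?thesis using z by (auto simp: center_def centralizer_def)
qed

lemma conj_eq_imp_commute:
  assumes "e \<in> carrier G" "f \<in> carrier G" "m \<in> carrier G"
    and "inv f \<otimes> m \<otimes> f = inv e \<otimes> m \<otimes> e"
  shows "e \<otimes> inv f \<otimes> m = m \<otimes> (e \<otimes> inv f)"
proof -
  have "e \<otimes> inv f \<otimes> m = e \<otimes> (inv f \<otimes> m \<otimes> f) \<otimes> inv f"
    using assms(1-3) by (simp add: m_assoc)
  also have "\<dots> = e \<otimes> (inv e \<otimes> m \<otimes> e) \<otimes> inv f"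
    using assms(4) by simp
  also have "\<dots> = m \<otimes> (e \<otimes> inv f)"
    using assms by (simp add: m_assoc[symmetric])
  finally show ?thesis .
qed

lemma center_conj:
  assumes "c \<in> center G" "x \<in> carrier G"
  shows "c \<otimes> x \<otimes> inv c = x"
  using assms by (simp add: center_commute[OF assms] center_closed m_assoc)

lemma commutator_mult_center:
  assumes "a \<in> carrier G" "b \<in> carrier G" "c \<in> center G" "d \<in> center G"
  shows "(c \<otimes> a) \<otimes> (d \<otimes> b) \<otimes> inv (c \<otimes> a) \<otimes> inv (d \<otimes> b) = a \<otimes> b \<otimes> inv a \<otimes> inv b"
proof -
  have cd: "c \<in> carrier G" "d \<in> carrier G" using assms center_closed by auto
  have "(c \<otimes> a) \<otimes> (d \<otimes> b) \<otimes> inv (c \<otimes> a) \<otimes> inv (d \<otimes> b)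
      = c \<otimes> (a \<otimes> (d \<otimes> b) \<otimes> inv a) \<otimes> inv c \<otimes> inv (d \<otimes> b)"
    using assms cd by (simp add: inv_mult_group m_assoc)
  also have "\<dots> = a \<otimes> (d \<otimes> b) \<otimes> inv a \<otimes> inv (d \<otimes> b)"
    using assms cd by (simp add: center_conj)
  also have "\<dots> = (a \<otimes> d) \<otimes> (b \<otimes> inv a \<otimes> inv b) \<otimes> inv d"
    using assms cd by (simp add: inv_mult_group m_assoc)
  also have "\<dots> = d \<otimes> (a \<otimes> b \<otimes> inv a \<otimes> inv b) \<otimes> inv d"
    using assms cd by (simp add: center_commute[of d a, symmetric] m_assoc)
  also have "\<dots> = a \<otimes> b \<otimes> inv a \<otimes> inv b"
    using assms cd by (simp add: center_conj)
  finally show ?thesis .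
qed

lemma center_defect_generate:
  assumes h: "h \<in> hom G G" and A: "A \<subseteq> carrier G"
    and defect: "\<And>g. g \<in> A \<Longrightarrow> g \<otimes> inv (h g) \<in> center G"
  shows "generate G A \<subseteq> {a \<in> carrier G. a \<otimes> inv (h a) \<in> center G}"
proof (intro generate_subgroup_incl subgroupI)
  interpret h: group_hom G G h by (simp add: group_hom_axioms.intro group_hom_def h is_group)
  interpret Z: subgroup "center G" G by (rule subgroup_center)
  show "A \<subseteq> {a \<in> carrier G. a \<otimes> inv (h a) \<in> center G}" using A defect by auto
  show "{a \<in> carrier G. a \<otimes> inv (h a) \<in> center G} \<subseteq> carrier G" by auto
  show "{a \<in> carrier G. a \<otimes> inv (h a) \<in> center G} \<noteq> {}" by auto
  fix a assume "a \<in> {a \<in> carrier G. a \<otimes> inv (h a) \<in> center G}"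
  then have a: "a \<in> carrier G" and e: "a \<otimes> inv (h a) \<in> center G" by auto
  have "inv a \<otimes> inv (h (inv a)) = (inv a \<otimes> inv (a \<otimes> inv (h a))) \<otimes> a"
    using a by (simp add: inv_mult_group m_assoc)
  also have "\<dots> = (inv (a \<otimes> inv (h a)) \<otimes> inv a) \<otimes> a"
    using a center_commute[OF Z.m_inv_closed[OF e] inv_closed] by simp
  also have "\<dots> = inv (a \<otimes> inv (h a))"
    using a by (simp add: m_assoc)
  finally show "inv a \<in> {a \<in> carrier G. a \<otimes> inv (h a) \<in> center G}" using a e by simp
next
  interpret h: group_hom G G h by (simp add: group_hom_axioms.intro group_hom_def h is_group)
  interpret Z: subgroup "center G" G by (rule subgroup_center)
  fix a b assume "a \<in> {a \<in> carrier G. a \<otimes> inv (h a) \<in> center G}"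
    "b \<in> {a \<in> carrier G. a \<otimes> inv (h a) \<in> center G}"
  then have ab: "a \<in> carrier G" "b \<in> carrier G"
    and e: "a \<otimes> inv (h a) \<in> center G" "b \<otimes> inv (h b) \<in> center G" by auto
  have "a \<otimes> b \<otimes> inv (h (a \<otimes> b)) = a \<otimes> (b \<otimes> inv (h b)) \<otimes> inv (h a)"
    using ab by (simp add: inv_mult_group m_assoc)
  also have "\<dots> = (b \<otimes> inv (h b)) \<otimes> a \<otimes> inv (h a)"
    using center_commute[OF e(2) ab(1)] by simp
  also have "\<dots> = (b \<otimes> inv (h b)) \<otimes> (a \<otimes> inv (h a))"
    using ab by (simp add: m_assoc)
  finally show "a \<otimes> b \<in> {a \<in> carrier G. a \<otimes> inv (h a) \<in> center G}" using ab e by simp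
qed

lemma endomorphism_fixes_derived:
  assumes h: "h \<in> hom G G"
    and defect: "\<And>a. a \<in> carrier G \<Longrightarrow> a \<otimes> inv (h a) \<in> center G"
  shows "derived G (carrier G) \<subseteq> {a \<in> carrier G. h a = a}"
  unfolding derived_def
proof (intro generate_subgroup_incl subgroupI)
  interpret h: group_hom G G h by (simp add: group_hom_axioms.intro group_hom_def h is_group)
  show "{a \<in> carrier G. h a = a} \<subseteq> carrier G" "{a \<in> carrier G. h a = a} \<noteq> {}" by auto
  show "a \<in> {a \<in> carrier G. h a = a} \<Longrightarrow> inv a \<in> {a \<in> carrier G. h a = a}" for a by auto
  show "a \<in> {a \<in> carrier G. h a = a} \<Longrightarrow> b \<in> {a \<in> carrier G. h a = a} \<Longrightarrow>
      a \<otimes> b \<in> {a \<in> carrier G. h a = a}" for a b by auto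
  have "h (x \<otimes> y \<otimes> inv x \<otimes> inv y) = x \<otimes> y \<otimes> inv x \<otimes> inv y"
    if "x \<in> carrier G" "y \<in> carrier G" for x y
  proof -
    have recombine: "(z \<otimes> inv (h z)) \<otimes> h z = z" if "z \<in> carrier G" for z
      using that by (simp add: m_assoc)
    have "h (x \<otimes> y \<otimes> inv x \<otimes> inv y) = h x \<otimes> h y \<otimes> inv (h x) \<otimes> inv (h y)"
      using that by simp
    also have "\<dots> = x \<otimes> y \<otimes> inv x \<otimes> inv y"
      using commutator_mult_center[OF h.hom_closed h.hom_closed defect defect, OF that that]
      unfolding recombine[OF that(1)] recombine[OF that(2)] ..
    finally show ?thesis .
  qed
  then show "derived_set G (carrier G) \<subseteq> {a \<in> carrier G. h a = a}" by auto
qed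

end

section \<open>Structure groups and their functoriality\<close>

lemma words_Nil [simp]: "[] \<in> words S"
  by (simp add: words_def)

lemma words_Cons [simp]: "l # w \<in> words S \<longleftrightarrow> fst l \<in> S \<and> w \<in> words S"
  by (auto simp: words_def)

lemma words_append [simp]: "u @ w \<in> words S \<longleftrightarrow> u \<in> words S \<and> w \<in> words S"
  by (auto simp: words_def)

lemma sg_class_eqI: "sg_rel S rop v w \<Longrightarrow> sg_class S rop v = sg_class S rop w"
  unfolding sg_class_def by (auto intro: sg_rel.sg_trans sg_rel.sg_sym)

lemma mem_sg_class: "w \<in> words S \<Longrightarrow> w \<in> sg_class S rop w"
  by (simp add: sg_class_def sg_rel.sg_refl)

definition rack_hom :: "'a set \<Rightarrow> ('a \<Rightarrow> 'a \<Rightarrow> 'a) \<Rightarrow> 'b set \<Rightarrow> ('b \<Rightarrow> 'b \<Rightarrow> 'b) \<Rightarrow> ('a \<Rightarrow> 'b) \<Rightarrow> bool"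
  where "rack_hom S rop T rop' f \<longleftrightarrow>
    (\<forall>x\<in>S. f x \<in> T) \<and> (\<forall>x\<in>S. \<forall>y\<in>S. f (rop x y) = rop' (f x) (f y))"

lemma rack_hom_comp:
  "rack_hom S rop T rop' f \<Longrightarrow> rack_hom T rop' U rop'' g \<Longrightarrow> rack_hom S rop U rop'' (g \<circ> f)"
  by (simp add: rack_hom_def)

lemma words_map_apfst: "rack_hom S rop T rop' f \<Longrightarrow> w \<in> words S \<Longrightarrow> map (apfst f) w \<in> words T"
  by (induction w) (auto simp: rack_hom_def)

lemma sg_rel_map_apfst:
  assumes f: "rack_hom S rop T rop' f" and "sg_rel S rop v w"
  shows "sg_rel T rop' (map (apfst f) v) (map (apfst f) w)"
  using assms(2)
proof (induction rule: sg_rel.induct)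
  case (sg_refl w)
  then show ?case using f by (intro sg_rel.sg_refl words_map_apfst)
next
  case (sg_cancel u v x b)
  then show ?case
    using sg_rel.sg_cancel[of "map (apfst f) u" T "map (apfst f) v" "f x" rop' b] f
    by (simp add: words_map_apfst rack_hom_def)
next
  case (sg_rack u v x y)
  then show ?case
    using sg_rel.sg_rack[of "map (apfst f) u" T "map (apfst f) v" "f x" "f y" rop'] f
    by (simp add: words_map_apfst rack_hom_def)
qed (blast intro: sg_rel.sg_sym sg_rel.sg_trans)+

definition sg_map :: "'b set \<Rightarrow> ('b \<Rightarrow> 'b \<Rightarrow> 'b) \<Rightarrow> ('a \<Rightarrow> 'b) \<Rightarrow>
    ('a \<times> bool) list set \<Rightarrow> ('b \<times> bool) list set"
  where "sg_map T rop' f A = {v. \<exists>a\<in>A. sg_rel T rop' (map (apfst f) a) v}"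

lemma sg_map_class:
  assumes f: "rack_hom S rop T rop' f" and w: "w \<in> words S"
  shows "sg_map T rop' f (sg_class S rop w) = sg_class T rop' (map (apfst f) w)"
proof (rule equalityI; rule subsetI)
  fix v assume "v \<in> sg_map T rop' f (sg_class S rop w)"
  then obtain w' where "sg_rel S rop w w'" "sg_rel T rop' (map (apfst f) w') v"
    by (auto simp: sg_map_def sg_class_def)
  then have "sg_rel T rop' (map (apfst f) w) v"
    using sg_rel_map_apfst[OF f] by (blast intro: sg_rel.sg_trans)
  then show "v \<in> sg_class T rop' (map (apfst f) w)" by (simp add: sg_class_def)
next
  fix v assume "v \<in> sg_class T rop' (map (apfst f) w)"
  then show "v \<in> sg_map T rop' f (sg_class S rop w)"
    using mem_sg_class[OF w] by (auto simp: sg_map_def sg_class_def)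
qed

lemma carrier_structure_group: "carrier (structure_group S rop) = sg_class S rop ` words S"
  by (simp add: structure_group_def)

lemma sg_map_comp:
  assumes "rack_hom S rop T rop' f" "rack_hom T rop' U rop'' g"
    and "A \<in> carrier (structure_group S rop)"
  shows "sg_map U rop'' g (sg_map T rop' f A) = sg_map U rop'' (g \<circ> f) A"
proof -
  obtain w where "w \<in> words S" "A = sg_class S rop w"
    using assms(3) by (auto simp: carrier_structure_group)
  then show ?thesis
    using assms(1,2) rack_hom_comp[OF assms(1,2)]
    by (simp add: sg_map_class words_map_apfst comp_def apfst_compose)
qed

lemma rack_hom_fst: "rack_hom (S \<times> T) (prod_op rop rop') S rop fst"
  by (simp add: rack_hom_def prod_op_def)

lemma rack_hom_snd: "rack_hom (S \<times> T) (prod_op rop rop') T rop' snd"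
  by (simp add: rack_hom_def prod_op_def)

lemma natural_map_eq_sg_map:
  assumes "A \<in> carrier (structure_group (S \<times> T) (prod_op rop rop'))"
  shows "natural_map S rop T rop' A = (sg_map S rop fst A, sg_map T rop' snd A)"
proof -
  obtain w where w: "w \<in> words (S \<times> T)" "A = sg_class (S \<times> T) (prod_op rop rop') w"
    using assms by (auto simp: carrier_structure_group)
  let ?proj = "\<lambda>w. (sg_class S rop (map (apfst fst) w), sg_class T rop' (map (apfst snd) w))"
  have "?proj v = ?proj w" if "v \<in> A" for v
  proof -
    have "sg_rel (S \<times> T) (prod_op rop rop') w v" using that w by (simp add: sg_class_def)
    then show ?thesis
      by (metis sg_class_eqI sg_rel_map_apfst rack_hom_fst rack_hom_snd)
  qed
  then have "?proj ` A = {?proj w}"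
    using w mem_sg_class by blast
  moreover have "natural_map S rop T rop' A = the_elem (?proj ` A)"
    by (simp add: natural_map_def apfst_def map_prod_def)
  ultimately show ?thesis
    using w by (simp add: sg_map_class rack_hom_fst rack_hom_snd)
qed

text \<open>The presentation of the structure group only needs \<open>S\<close> to be closed under \<open>rop\<close>;
  none of the rack axioms is used.\<close>

locale op_closed =
  fixes S :: "'a set" and rop :: "'a \<Rightarrow> 'a \<Rightarrow> 'a"
  assumes rop_closed: "x \<in> S \<Longrightarrow> y \<in> S \<Longrightarrow> rop x y \<in> S"
begin

abbreviation \<Gamma> where "\<Gamma> \<equiv> structure_group S rop"
abbreviation cls where "cls \<equiv> sg_class S rop"

lemma sg_rel_words: "sg_rel S rop v w \<Longrightarrow> v \<in> words S \<and> w \<in> words S"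
  by (induction rule: sg_rel.induct) (auto simp: rop_closed)

lemma sg_rel_append_context:
  assumes "sg_rel S rop v w" "u \<in> words S" "u' \<in> words S"
  shows "sg_rel S rop (u @ v @ u') (u @ w @ u')"
  using assms
proof (induction rule: sg_rel.induct)
  case (sg_refl w)
  then show ?case by (simp add: sg_rel.sg_refl)
next
  case (sg_cancel u0 v0 x b)
  then show ?case using sg_rel.sg_cancel[of "u @ u0" S "v0 @ u'" x rop b] by simp
next
  case (sg_rack u0 v0 x y)
  then show ?case using sg_rel.sg_rack[of "u @ u0" S "v0 @ u'" x y rop] by simp
qed (blast intro: sg_rel.sg_sym sg_rel.sg_trans)+

lemma sg_rel_append:
  assumes "sg_rel S rop a a'" "sg_rel S rop b b'"
  shows "sg_rel S rop (a @ b) (a' @ b')"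
proof -
  have "sg_rel S rop ([] @ a @ b) ([] @ a' @ b)"
    using sg_rel_append_context[OF assms(1), where u="[]" and u'=b] sg_rel_words[OF assms(2)]
    by simp
  moreover have "sg_rel S rop (a' @ b @ []) (a' @ b' @ [])"
    using sg_rel_append_context[OF assms(2), where u=a' and u'="[]"] sg_rel_words[OF assms(1)]
    by simp
  ultimately show ?thesis by (auto intro: sg_rel.sg_trans)
qed

lemma mult_cls:
  assumes "a \<in> words S" "b \<in> words S"
  shows "cls a \<otimes>\<^bsub>\<Gamma>\<^esub> cls b = cls (a @ b)"
proof (rule equalityI; rule subsetI)
  fix v assume "v \<in> cls a \<otimes>\<^bsub>\<Gamma>\<^esub> cls b"
  then obtain a' b' where "sg_rel S rop a a'" "sg_rel S rop b b'" "sg_rel S rop (a' @ b') v"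
    by (auto simp: structure_group_def sg_class_def)
  then show "v \<in> cls (a @ b)"
    by (auto simp: sg_class_def intro: sg_rel.sg_trans sg_rel_append)
next
  fix v assume "v \<in> cls (a @ b)"
  then show "v \<in> cls a \<otimes>\<^bsub>\<Gamma>\<^esub> cls b"
    using assms mem_sg_class by (fastforce simp: structure_group_def sg_class_def)
qed

lemma one_structure_group: "\<one>\<^bsub>\<Gamma>\<^esub> = cls []"
  by (simp add: structure_group_def)

lemma letter_cancel: "x \<in> S \<Longrightarrow> cls [(x, b)] \<otimes>\<^bsub>\<Gamma>\<^esub> cls [(x, \<not> b)] = \<one>\<^bsub>\<Gamma>\<^esub>"
  using sg_rel.sg_cancel[of "[]" S "[]" x rop b]
  by (simp add: mult_cls one_structure_group sg_class_eqI)

lemma group_structure_group: "group \<Gamma>"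
proof -
  have "monoid \<Gamma>"
    by (rule monoidI) (auto simp: carrier_structure_group one_structure_group mult_cls)
  moreover have "cls w \<in> Units \<Gamma>" if "w \<in> words S" for w
    using that
  proof (induction w)
    case Nil
    then show ?case
      using monoid.Units_one_closed[OF \<open>monoid \<Gamma>\<close>] by (simp add: one_structure_group)
  next
    case (Cons l w)
    obtain x b where l: "l = (x, b)" by fastforce
    have "cls [(x, b)] \<in> Units \<Gamma>"
      using Cons.prems letter_cancel[of x b] letter_cancel[of x "\<not> b"] l
      by (auto simp: Units_def carrier_structure_group)
    then show ?case
      using Cons \<open>monoid \<Gamma>\<close> l monoid.Units_m_closed mult_cls[of "[(x, b)]" w] by fastforce
  qed
  then have "carrier \<Gamma> \<subseteq> Units \<Gamma>"
    by (auto simp: carrier_structure_group)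
  ultimately show ?thesis
    by (simp add: group_def group_axioms_def)
qed

sublocale group \<Gamma>
  by (rule group_structure_group)

lemma cls_closed: "w \<in> words S \<Longrightarrow> cls w \<in> carrier \<Gamma>"
  by (simp add: carrier_structure_group)

lemma inv_letter: "x \<in> S \<Longrightarrow> inv\<^bsub>\<Gamma>\<^esub> cls [(x, True)] = cls [(x, False)]"
  using letter_cancel[of x False] by (intro inv_equality) (auto intro: cls_closed)

lemma carrier_eq_generate_letters:
  "carrier \<Gamma> = generate \<Gamma> ((\<lambda>x. cls [(x, True)]) ` S)"
proof
  show "generate \<Gamma> ((\<lambda>x. cls [(x, True)]) ` S) \<subseteq> carrier \<Gamma>"
    by (rule generate_incl) (auto intro: cls_closed)
  have "cls w \<in> generate \<Gamma> ((\<lambda>x. cls [(x, True)]) ` S)" if "w \<in> words S" for w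
    using that
  proof (induction w)
    case Nil
    show ?case unfolding one_structure_group[symmetric] by (rule generate.one)
  next
    case (Cons l w)
    obtain x b where l: "l = (x, b)" by fastforce
    have x: "x \<in> S" using Cons.prems l by simp
    have letter: "cls [(x, b)] \<in> generate \<Gamma> ((\<lambda>x. cls [(x, True)]) ` S)"
    proof (cases b)
      case True
      then show ?thesis using x by (auto intro: generate.incl)
    next
      case False
      have "inv\<^bsub>\<Gamma>\<^esub> cls [(x, True)] \<in> generate \<Gamma> ((\<lambda>x. cls [(x, True)]) ` S)"
        using x by (auto intro: generate.inv)
      then show ?thesis using x False by (simp add: inv_letter)
    qed
    have "cls (l # w) = cls [(x, b)] \<otimes>\<^bsub>\<Gamma>\<^esub> cls w"
      using Cons.prems l x by (simp add: mult_cls)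
    then show ?case
      using generate.eng[OF letter Cons.IH] Cons.prems by simp
  qed
  then show "carrier \<Gamma> \<subseteq> generate \<Gamma> ((\<lambda>x. cls [(x, True)]) ` S)"
    by (auto simp: carrier_structure_group)
qed

lemma conj_letter:
  assumes "x \<in> S" "y \<in> S"
  shows "inv\<^bsub>\<Gamma>\<^esub> cls [(y, True)] \<otimes>\<^bsub>\<Gamma>\<^esub> cls [(x, True)] \<otimes>\<^bsub>\<Gamma>\<^esub> cls [(y, True)]
    = cls [(rop x y, True)]"
  using assms sg_rel.sg_rack[of "[]" S "[]" x y rop]
  by (simp add: inv_letter mult_cls sg_class_eqI rop_closed)

end

lemma op_closed_prod: "op_closed S rop \<Longrightarrow> op_closed T rop' \<Longrightarrow> op_closed (S \<times> T) (prod_op rop rop')"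
  by (auto simp: op_closed_def prod_op_def)

lemma op_closed_UNIV: "op_closed UNIV rop"
  by (simp add: op_closed_def)

lemma sg_map_hom:
  assumes "op_closed S rop" "op_closed T rop'" "rack_hom S rop T rop' f"
  shows "sg_map T rop' f \<in> hom (structure_group S rop) (structure_group T rop')"
proof (rule homI)
  interpret S: op_closed S rop by fact
  interpret T: op_closed T rop' by fact
  fix A B assume "A \<in> carrier S.\<Gamma>" "B \<in> carrier S.\<Gamma>"
  then obtain a b where "a \<in> words S" "b \<in> words S" "A = S.cls a" "B = S.cls b"
    by (auto simp: carrier_structure_group)
  with assms(3) show "sg_map T rop' f A \<in> carrier T.\<Gamma>"
    and "sg_map T rop' f (A \<otimes>\<^bsub>S.\<Gamma>\<^esub> B) = sg_map T rop' f A \<otimes>\<^bsub>T.\<Gamma>\<^esub> sg_map T rop' f B"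
    by (simp_all add: sg_map_class S.mult_cls T.mult_cls T.cls_closed words_map_apfst)
qed

section \<open>The product with the trivial rack on two elements\<close>

lemma rack_hom_copy: "rack_hom S rop (S \<times> UNIV) (prod_op rop triv_op) (\<lambda>x. (x, b))"
  by (simp add: rack_hom_def prod_op_def triv_op_def)

context op_closed
begin

interpretation Y: op_closed "S \<times> UNIV" "prod_op rop triv_op"
  by (intro op_closed_prod op_closed_UNIV) unfold_locales

abbreviation collapse where
  "collapse \<equiv> sg_map (S \<times> UNIV) (prod_op rop triv_op) ((\<lambda>x. (x, False)) \<circ> fst)"

lemma rack_hom_collapse:
  "rack_hom (S \<times> UNIV) (prod_op rop triv_op) (S \<times> UNIV) (prod_op rop triv_op) ((\<lambda>x. (x, False)) \<circ> fst)"
  by (rule rack_hom_comp[OF rack_hom_fst rack_hom_copy])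

lemma copy_quotient_central:
  assumes x: "x \<in> S"
  shows "Y.cls [((x, a), True)] \<otimes>\<^bsub>Y.\<Gamma>\<^esub> inv\<^bsub>Y.\<Gamma>\<^esub> Y.cls [((x, b), True)] \<in> center Y.\<Gamma>"
proof (rule Y.center_if_commutes_with_generators[OF Y.carrier_eq_generate_letters])
  show "(\<lambda>p. Y.cls [(p, True)]) ` (S \<times> UNIV) \<subseteq> carrier Y.\<Gamma>"
    by (auto intro: Y.cls_closed)
  show "Y.cls [((x, a), True)] \<otimes>\<^bsub>Y.\<Gamma>\<^esub> inv\<^bsub>Y.\<Gamma>\<^esub> Y.cls [((x, b), True)] \<in> carrier Y.\<Gamma>"
    using x by (simp add: Y.cls_closed)
  fix g assume "g \<in> (\<lambda>p. Y.cls [(p, True)]) ` (S \<times> UNIV)"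
  then obtain p where p: "p \<in> S \<times> UNIV" "g = Y.cls [(p, True)]" by blast
  have "inv\<^bsub>Y.\<Gamma>\<^esub> Y.cls [((x, c), True)] \<otimes>\<^bsub>Y.\<Gamma>\<^esub> g \<otimes>\<^bsub>Y.\<Gamma>\<^esub> Y.cls [((x, c), True)]
      = Y.cls [((rop (fst p) x, snd p), True)]" for c
    using x p by (simp add: Y.conj_letter prod_op_def triv_op_def)
  then show "Y.cls [((x, a), True)] \<otimes>\<^bsub>Y.\<Gamma>\<^esub> inv\<^bsub>Y.\<Gamma>\<^esub> Y.cls [((x, b), True)] \<otimes>\<^bsub>Y.\<Gamma>\<^esub> g
      = g \<otimes>\<^bsub>Y.\<Gamma>\<^esub> (Y.cls [((x, a), True)] \<otimes>\<^bsub>Y.\<Gamma>\<^esub> inv\<^bsub>Y.\<Gamma>\<^esub> Y.cls [((x, b), True)])"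
    using x p by (intro Y.conj_eq_imp_commute) (simp_all add: Y.cls_closed)
qed

lemma collapse_hom: "collapse \<in> hom Y.\<Gamma> Y.\<Gamma>"
  by (intro sg_map_hom rack_hom_collapse) unfold_locales

lemma collapse_defect_central:
  assumes "A \<in> carrier Y.\<Gamma>"
  shows "A \<otimes>\<^bsub>Y.\<Gamma>\<^esub> inv\<^bsub>Y.\<Gamma>\<^esub> collapse A \<in> center Y.\<Gamma>"
proof -
  have "generate Y.\<Gamma> ((\<lambda>p. Y.cls [(p, True)]) ` (S \<times> UNIV))
      \<subseteq> {A \<in> carrier Y.\<Gamma>. A \<otimes>\<^bsub>Y.\<Gamma>\<^esub> inv\<^bsub>Y.\<Gamma>\<^esub> collapse A \<in> center Y.\<Gamma>}"
  proof (rule Y.center_defect_generate[OF collapse_hom])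
    show "(\<lambda>p. Y.cls [(p, True)]) ` (S \<times> UNIV) \<subseteq> carrier Y.\<Gamma>"
      by (auto intro: Y.cls_closed)
    fix g assume "g \<in> (\<lambda>p. Y.cls [(p, True)]) ` (S \<times> UNIV)"
    then obtain x a where "x \<in> S" "g = Y.cls [((x, a), True)]" by auto
    then show "g \<otimes>\<^bsub>Y.\<Gamma>\<^esub> inv\<^bsub>Y.\<Gamma>\<^esub> collapse g \<in> center Y.\<Gamma>"
      using copy_quotient_central[of x a False] by (simp add: sg_map_class[OF rack_hom_collapse])
  qed
  then show ?thesis using assms Y.carrier_eq_generate_letters by auto
qed

lemma collapse_fixes_derived:
  "A \<in> derived Y.\<Gamma> (carrier Y.\<Gamma>) \<Longrightarrow> collapse A = A"
  using Y.endomorphism_fixes_derived[OF collapse_hom collapse_defect_central] by auto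

lemma inj_on_sg_map_fst_derived:
  "inj_on (sg_map S rop fst) (derived Y.\<Gamma> (carrier Y.\<Gamma>))"
proof (rule inj_onI)
  fix A B assume A: "A \<in> derived Y.\<Gamma> (carrier Y.\<Gamma>)" and B: "B \<in> derived Y.\<Gamma> (carrier Y.\<Gamma>)"
    and eq: "sg_map S rop fst A = sg_map S rop fst B"
  have "A \<in> carrier Y.\<Gamma>" "B \<in> carrier Y.\<Gamma>"
    using A B Y.derived_in_carrier by auto
  then have "collapse A = collapse B"
    using eq by (simp add: sg_map_comp[OF rack_hom_fst rack_hom_copy, symmetric])
  then show "A = B" using A B collapse_fixes_derived by simp
qed

end

theorem proposition4p26:
  fixes S :: "'a set" and rop :: "'a \<Rightarrow> 'a \<Rightarrow> 'a"
  assumes "is_rack S rop"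
  shows "inj_on (natural_map S rop (UNIV :: bool set) triv_op)
           (derived (structure_group (S \<times> (UNIV :: bool set)) (prod_op rop triv_op))
                    (carrier (structure_group (S \<times> (UNIV :: bool set)) (prod_op rop triv_op))))"
proof -
  interpret op_closed S rop
    using assms by (simp add: is_rack_def op_closed_def)
  interpret Y: op_closed "S \<times> (UNIV :: bool set)" "prod_op rop triv_op"
    by (intro op_closed_prod op_closed_UNIV) unfold_locales
  show ?thesis
  proof (rule inj_onI)
    fix A B
    assume A: "A \<in> derived Y.\<Gamma> (carrier Y.\<Gamma>)" and B: "B \<in> derived Y.\<Gamma> (carrier Y.\<Gamma>)"
      and eq: "natural_map S rop UNIV triv_op A = natural_map S rop UNIV triv_op B"
    have "A \<in> carrier Y.\<Gamma>" "B \<in> carrier Y.\<Gamma>"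
      using A B Y.derived_in_carrier by auto
    then have "sg_map S rop fst A = sg_map S rop fst B"
      using eq by (simp add: natural_map_eq_sg_map)
    then show "A = B"
      using inj_on_sg_map_fst_derived A B by (auto dest: inj_onD)
  qed
qed

end
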